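(* There exist (vertex-colored) graphs $G, H$ with a permutation equivariant filtration such that the forward persistence diagrams of $G$ and $H$ coincide in all degrees but their backward persistence diagrams differ. Similarly, there exist graphs $G,H$ with a permutation equivariant filtration such that their backward persistence diagrams coincide in all degrees but their forward persistence diagrams differ.
   Context: Graphs are finite, undirected, possibly with self-loops and multi-edges, regarded as topological spaces. A filtration function on $G=(V,E)$ is $f: V\cup E\to\mathbb{R}$ with $f(v),f(w)\le f(e)$ for each edge $e$ with endpoints $v,w$. With distinct values $a_0<\dots<a_n$, put $G_{-1}=\emptyset$, $G_i=f^{-1}((-\infty,a_i])$. The intermediate complex $\mathrm{IC}_i(G,f)$ consists of the vertices and edges of $G_i\setminus G_{i-1}$ together with the endpoints of those edges. For a sequence of spaces and maps, applying $H_k(-;\mathbb{Z}/2)$ gives a persistence module whose $k$-th persistence diagram is the multiset of intervals $(b,d)$ of its interval decomposition, indexed by positions in the sequence. Forward persistence: diagrams of $G_0\subset\dots\subset G_n$. Backward persistence: diagrams of $G\to G/\mathrm{IC}_n(G)\to (G/\mathrm{IC}_n(G))/( *\cup\mathrm{IC}_{n-1}(G))\to\dots\to\text{point}$, contracting $\mathrm{IC}_n,\dots,\mathrm{IC}_0$ in turn, where $*$ is the point to which all previously contracted pieces are collapsed, with quotient maps. A permutation equivariant filtration is a rule assigning to each (possibly vertex-colored) graph $G$ a filtration function $f_G$ such that $f_H\circ\varphi=f_G$ for every (color-preserving) graph isomorphism $\varphi:G\to H$ (e.g. vertex-color filtrations, degree filtration). *)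

theory Defs
  imports "HOL-Library.Z2" "HOL-Library.Extended_Nat" "HOL-Library.Function_Algebras"
begin

section \<open>Graphs (finite, undirected, loops and multi-edges allowed, vertex-coloured)\<close>

record graph =
  gV   :: "nat set"
  gE   :: "nat set"
  ends :: "nat \<Rightarrow> nat \<times> nat"   \<comment> \<open>endpoints of an edge; unordered, a loop has equal endpoints\<close>
  col  :: "nat \<Rightarrow> nat"          \<comment> \<open>vertex colours (constant colour = uncoloured graph)\<close>

definition wf_graph :: "graph \<Rightarrow> bool" where
  "wf_graph G \<longleftrightarrow> finite (gV G) \<and> finite (gE G) \<and>
     (\<forall>e\<in>gE G. fst (ends G e) \<in> gV G \<and> snd (ends G e) \<in> gV G)"

definition graph_iso :: "graph \<Rightarrow> graph \<Rightarrow> (nat \<Rightarrow> nat) \<Rightarrow> (nat \<Rightarrow> nat) \<Rightarrow> bool" where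
  "graph_iso G H pv pe \<longleftrightarrow>
     bij_betw pv (gV G) (gV H) \<and> bij_betw pe (gE G) (gE H) \<and>
     (\<forall>e\<in>gE G. ends H (pe e) = (pv (fst (ends G e)), pv (snd (ends G e))) \<or>
                ends H (pe e) = (pv (snd (ends G e)), pv (fst (ends G e)))) \<and>
     (\<forall>v\<in>gV G. col H (pv v) = col G v)"

text \<open>A filtration function on G is given by its values on vertices and on edges.\<close>
type_synonym filt = "(nat \<Rightarrow> real) \<times> (nat \<Rightarrow> real)"

definition is_filtration :: "graph \<Rightarrow> filt \<Rightarrow> bool" where
  "is_filtration G f \<longleftrightarrow>
     (\<forall>e\<in>gE G. fst f (fst (ends G e)) \<le> snd f e \<and> fst f (snd (ends G e)) \<le> snd f e)"

definition perm_equiv_filtration :: "(graph \<Rightarrow> filt) \<Rightarrow> bool" where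
  "perm_equiv_filtration F \<longleftrightarrow>
     (\<forall>G. wf_graph G \<longrightarrow> is_filtration G (F G)) \<and>
     (\<forall>G H pv pe. wf_graph G \<longrightarrow> wf_graph H \<longrightarrow> graph_iso G H pv pe \<longrightarrow>
        (\<forall>v\<in>gV G. fst (F H) (pv v) = fst (F G) v) \<and>
        (\<forall>e\<in>gE G. snd (F H) (pe e) = snd (F G) e))"

text \<open>Distinct values a_0 < ... < a_n (as a sorted list; n+1 = its length).\<close>
definition fvals :: "graph \<Rightarrow> filt \<Rightarrow> real list" where
  "fvals G f = sorted_list_of_set (fst f ` gV G \<union> snd f ` gE G)"

definition nvals :: "graph \<Rightarrow> filt \<Rightarrow> nat" where
  "nvals G f = length (fvals G f)"

definition subV :: "graph \<Rightarrow> filt \<Rightarrow> nat \<Rightarrow> nat set" where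
  "subV G f i = {v\<in>gV G. fst f v \<le> fvals G f ! i}"
definition subE :: "graph \<Rightarrow> filt \<Rightarrow> nat \<Rightarrow> nat set" where
  "subE G f i = {e\<in>gE G. snd f e \<le> fvals G f ! i}"

text \<open>Intermediate complex IC_i: cells of G_i minus G_(i-1), plus endpoints of those edges.\<close>
definition ICE :: "graph \<Rightarrow> filt \<Rightarrow> nat \<Rightarrow> nat set" where
  "ICE G f i = {e\<in>gE G. snd f e = fvals G f ! i}"
definition ICV :: "graph \<Rightarrow> filt \<Rightarrow> nat \<Rightarrow> nat set" where
  "ICV G f i = {v\<in>gV G. fst f v = fvals G f ! i} \<union>
               {v. \<exists>e\<in>ICE G f i. v = fst (ends G e) \<or> v = snd (ends G e)}"

text \<open>A space of the form S/A: S a subgraph of G (vertex set SV, edge set SE) and A a subgraph of S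
  (AV, AE) collapsed to one point \<open>None\<close>; if A is empty nothing is collapsed.
  0-cells are labelled by \<open>nat option\<close>, 1-cells by \<open>nat\<close>.\<close>
type_synonym space = "nat set \<times> nat set \<times> nat set \<times> nat set"

definition cproj :: "space \<Rightarrow> nat \<Rightarrow> nat option" where
  "cproj X v = (case X of (SV, SE, AV, AE) \<Rightarrow> if v \<in> AV then None else Some v)"

definition cells0 :: "space \<Rightarrow> nat option set" where
  "cells0 X = (case X of (SV, SE, AV, AE) \<Rightarrow> cproj X ` SV)"

definition cells1 :: "space \<Rightarrow> nat set" where
  "cells1 X = (case X of (SV, SE, AV, AE) \<Rightarrow> SE - AE)"

text \<open>Vector space of Z/2-valued functions (chains are those supported on the cells).\<close>
definition fscale :: "'b::field \<Rightarrow> ('a \<Rightarrow> 'b) \<Rightarrow> ('a \<Rightarrow> 'b)" where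
  "fscale c g = (\<lambda>x. c * g x)"

abbreviation fdim :: "('a \<Rightarrow> bit) set \<Rightarrow> nat" where
  "fdim \<equiv> vector_space.dim (fscale :: bit \<Rightarrow> _)"
abbreviation fspan :: "('a \<Rightarrow> bit) set \<Rightarrow> ('a \<Rightarrow> bit) set" where
  "fspan \<equiv> module.span (fscale :: bit \<Rightarrow> _)"

definition C0 :: "space \<Rightarrow> (nat option \<Rightarrow> bit) set" where
  "C0 X = {c. \<forall>x. x \<notin> cells0 X \<longrightarrow> c x = 0}"
definition C1 :: "space \<Rightarrow> (nat \<Rightarrow> bit) set" where
  "C1 X = {c. \<forall>x. x \<notin> cells1 X \<longrightarrow> c x = 0}"

text \<open>Cellular boundary (mod 2): a loop has boundary 0.\<close>
definition bdry :: "graph \<Rightarrow> space \<Rightarrow> (nat \<Rightarrow> bit) \<Rightarrow> (nat option \<Rightarrow> bit)" where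
  "bdry G X c = (\<lambda>y. \<Sum>e\<in>cells1 X. c e *
      ((if cproj X (fst (ends G e)) = y then 1 else 0) + (if cproj X (snd (ends G e)) = y then 1 else 0)))"

definition Z1 :: "graph \<Rightarrow> space \<Rightarrow> (nat \<Rightarrow> bit) set" where
  "Z1 G X = {c \<in> C1 X. bdry G X c = (\<lambda>_. 0)}"
definition B0 :: "graph \<Rightarrow> space \<Rightarrow> (nat option \<Rightarrow> bit) set" where
  "B0 G X = bdry G X ` C1 X"

text \<open>Chain map induced by the cellular map X \<rightarrow> Y (inclusion followed by quotient), for
  X = S/A, Y = S'/A' with S \<subseteq> S', A \<subseteq> A'.\<close>
definition cmap0 :: "space \<Rightarrow> space \<Rightarrow> (nat option \<Rightarrow> bit) \<Rightarrow> (nat option \<Rightarrow> bit)" where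
  "cmap0 X Y c = (\<lambda>y. \<Sum>x\<in>cells0 X. if (case x of None \<Rightarrow> None | Some v \<Rightarrow> cproj Y v) = y
                                         then c x else 0)"
definition cmap1 :: "space \<Rightarrow> space \<Rightarrow> (nat \<Rightarrow> bit) \<Rightarrow> (nat \<Rightarrow> bit)" where
  "cmap1 X Y c = (\<lambda>e. if e \<in> cells1 Y then c e else 0)"

text \<open>Rank of the induced map H_k(X) \<rightarrow> H_k(Y) (coefficients Z/2):
  dim((f(Z_k X) + B_k Y)/B_k Y).  Here Z_0 = C_0, B_1 = 0, and H_k = 0 for k \<ge> 2.\<close>
definition hrank :: "graph \<Rightarrow> nat \<Rightarrow> space \<Rightarrow> space \<Rightarrow> nat" where
  "hrank G k X Y =
     (if k = 0 then fdim (cmap0 X Y ` C0 X \<union> B0 G Y) - fdim (B0 G Y)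
      else if k = 1 then fdim (cmap1 X Y ` Z1 G X)
      else 0)"

text \<open>For a persistence module of length L (positions 0..L-1) with rank function r i j
  (rank of the structure map from position i to position j, i \<le> j), the multiplicity of the
  interval (b,d): (b, enat d) means the class is born at b and is present up to position d-1
  (dies at d, d \<le> L-1); (b, \<infinity>) means it survives to position L-1.  This is the interval
  decomposition multiplicity, computed by the rank inclusion-exclusion formula.
  The diagram is represented by its multiplicity (count) function.\<close>
definition dgm :: "nat \<Rightarrow> (nat \<Rightarrow> nat \<Rightarrow> nat) \<Rightarrow> nat \<times> enat \<Rightarrow> nat" where
  "dgm L r bd = (case bd of
     (b, \<infinity>) \<Rightarrow> if b < L then nat (int (r b (L-1)) - (if b = 0 then 0 else int (r (b-1) (L-1)))) else 0
   | (b, enat d) \<Rightarrow> if b < d \<and> d < L then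
        nat (int (r b (d-1)) - int (r b d)
             - (if b = 0 then 0 else int (r (b-1) (d-1)))
             + (if b = 0 then 0 else int (r (b-1) d)))
      else 0)"

definition fwd_space :: "graph \<Rightarrow> filt \<Rightarrow> nat \<Rightarrow> space" where
  "fwd_space G f i = (subV G f i, subE G f i, {}, {})"

definition fwd_dgm :: "(graph \<Rightarrow> filt) \<Rightarrow> graph \<Rightarrow> nat \<Rightarrow> nat \<times> enat \<Rightarrow> nat" where
  "fwd_dgm F G k = dgm (nvals G (F G))
      (\<lambda>i j. hrank G k (fwd_space G (F G) i) (fwd_space G (F G) j))"

text \<open>Backward sequence: position j is G with IC_n \<union> ... \<union> IC_(n-j+1) collapsed to a point
  (position 0 is G, position n+1 is a point); maps are the quotient maps.\<close>
definition bwd_space :: "graph \<Rightarrow> filt \<Rightarrow> nat \<Rightarrow> space" where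
  "bwd_space G f j = (gV G, gE G,
      (\<Union>i\<in>{nvals G f - j..<nvals G f}. ICV G f i),
      (\<Union>i\<in>{nvals G f - j..<nvals G f}. ICE G f i))"

definition bwd_dgm :: "(graph \<Rightarrow> filt) \<Rightarrow> graph \<Rightarrow> nat \<Rightarrow> nat \<times> enat \<Rightarrow> nat" where
  "bwd_dgm F G k = dgm (nvals G (F G) + 1)
      (\<lambda>i j. hrank G k (bwd_space G (F G) i) (bwd_space G (F G) j))"

end

theory Submission
  imports Defs "HOL-Library.Indicator_Function"
begin

text \<open>Both examples use the filtration by vertex colours, in which an edge enters at the larger
  colour of its endpoints; all graphs involved are forests, so only \<open>H\<^sub>0\<close> is nonzero.
  Forward persistence sees only sublevel sets: two isolated points, and two points to which an edge
  to a new vertex of colour 1 is attached later, both carry two \<open>H\<^sub>0\<close> classes born at 0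
  that never die.  Backward persistence collapses the top intermediate complex first: for the two
  points this merges the components at once, whereas collapsing the new edge of the second graph
  leaves two components.  Dually, a point and the path 0--2--1 with middle vertex of colour 1
  become a single point after one backward step, but forward the path starts as two points
  that merge at level 1.\<close>

section \<open>Chains with coefficients in \<open>\<int>/2\<close>\<close>

lemma vector_space_fscale: "vector_space (fscale :: bit \<Rightarrow> ('a \<Rightarrow> bit) \<Rightarrow> ('a \<Rightarrow> bit))"
  by unfold_locales
     (simp_all only: fscale_def plus_fun_def distrib_left distrib_right mult.assoc mult_1_left)

interpretation FV: vector_space "fscale :: bit \<Rightarrow> ('a \<Rightarrow> bit) \<Rightarrow> ('a \<Rightarrow> bit)"
  by (rule vector_space_fscale)

definition supported_on :: "'a set \<Rightarrow> ('a \<Rightarrow> bit) set" where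
  "supported_on T = {c. \<forall>x. x \<notin> T \<longrightarrow> c x = 0}"

lemma sum_apply: "(sum f S) x = (\<Sum>v\<in>S. f v x)"
  by (induction S rule: infinite_finite_induct) auto

lemma subspace_supported_on: "FV.subspace (supported_on T)"
  unfolding FV.subspace_def supported_on_def fscale_def by auto

lemma expansion_in_indicators:
  assumes "finite T" "c \<in> supported_on T"
  shows "c = (\<Sum>t\<in>T. fscale (c t) (indicator {t}))"
proof
  fix x
  have "(\<Sum>t\<in>T. fscale (c t) (indicator {t})) x = (\<Sum>t\<in>T. if t = x then c t else 0)"
    by (auto simp: sum_apply fscale_def indicator_def intro: sum.cong)
  also have "\<dots> = c x" using assms by (auto simp: supported_on_def)
  finally show "c x = (\<Sum>t\<in>T. fscale (c t) (indicator {t})) x" by simp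
qed

lemma span_indicators:
  assumes "finite T" shows "FV.span ((\<lambda>t. indicator {t}) ` T) = supported_on T"
proof
  show "FV.span ((\<lambda>t. indicator {t}) ` T) \<subseteq> supported_on T"
    by (rule FV.span_minimal[OF _ subspace_supported_on]) (auto simp: supported_on_def indicator_def)
  show "supported_on T \<subseteq> FV.span ((\<lambda>t. indicator {t}) ` T)"
  proof
    fix c assume "c \<in> supported_on T"
    then have "c = (\<Sum>t\<in>T. fscale (c t) (indicator {t}))"
      by (rule expansion_in_indicators[OF assms])
    also have "\<dots> \<in> FV.span ((\<lambda>t. indicator {t}) ` T)"
      by (intro FV.span_sum FV.span_scale FV.span_base) auto
    finally show "c \<in> FV.span ((\<lambda>t. indicator {t}) ` T)" .
  qed
qed

lemma independent_indicators: "FV.independent ((\<lambda>t. indicator {t} :: 'a \<Rightarrow> bit) ` T)"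
proof (unfold FV.independent_explicit_module, intro allI impI)
  fix S u v assume fin: "finite S" and sub: "S \<subseteq> (\<lambda>t. indicator {t}) ` T"
    and zero: "(\<Sum>w\<in>S. fscale (u w) w) = 0" and v: "v \<in> S"
  obtain s where s: "v = indicator {s}" "s \<in> T" using v sub by auto
  have "fscale (u w) w s = (if w = v then u w else 0)" if "w \<in> S" for w
    using that sub s by (auto simp: fscale_def indicator_def fun_eq_iff)
  then have "(\<Sum>w\<in>S. fscale (u w) w) s = (\<Sum>w\<in>S. if w = v then u w else 0)"
    unfolding sum_apply by (rule sum.cong[OF refl])
  then have "0 = (\<Sum>w\<in>S. if w = v then u w else 0)"
    using zero by simp
  also have "\<dots> = u v" using fin v by simp
  finally show "u v = 0" by simp
qed

lemma dim_eq_card_if_span_supported_on: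
  assumes "finite T" "FV.span S = supported_on T" shows "fdim S = card T"
proof -
  have "fdim S = fdim (FV.span ((\<lambda>t. indicator {t}) ` T))"
    using assms span_indicators by (metis FV.dim_span)
  also have "\<dots> = card ((\<lambda>t. indicator {t} :: 'a \<Rightarrow> bit) ` T)"
    by (rule FV.dim_span_eq_card_independent[OF independent_indicators])
  also have "\<dots> = card T"
    by (rule card_image) (auto simp: inj_on_def indicator_def fun_eq_iff split: if_splits)
  finally show ?thesis .
qed

lemma span_eq_supported_on:
  assumes "finite T" "(\<lambda>t. indicator {t}) ` T \<subseteq> FV.span S" "S \<subseteq> supported_on T"
  shows "FV.span S = supported_on T"
proof
  show "FV.span S \<subseteq> supported_on T"
    using assms(3) by (rule FV.span_minimal[OF _ subspace_supported_on])
  show "supported_on T \<subseteq> FV.span S"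
    using span_indicators[OF assms(1)] FV.span_mono[OF assms(2)] by (simp add: FV.span_span)
qed

lemma dim_singleton_zero: "fdim {0} = 0"
  by (metis FV.dim_span_eq_card_independent FV.independent_empty FV.span_empty card.empty)

section \<open>Ranks of induced maps in homology\<close>

definition cell_image :: "space \<Rightarrow> nat option \<Rightarrow> nat option" where
  "cell_image Y x = (case x of None \<Rightarrow> None | Some v \<Rightarrow> cproj Y v)"

lemma C0_eq: "C0 X = supported_on (cells0 X)"
  by (simp add: C0_def supported_on_def)

lemma C1_eq: "C1 X = supported_on (cells1 X)"
  by (simp add: C1_def supported_on_def)

lemma cmap0_indicator:
  assumes "finite (cells0 X)" "x \<in> cells0 X"
  shows "cmap0 X Y (indicator {x}) = indicator {cell_image Y x}"
proof
  fix y
  have "cmap0 X Y (indicator {x}) y =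
      (\<Sum>x'\<in>cells0 X. if x' = x then indicator {cell_image Y x} y else 0)"
    unfolding cmap0_def cell_image_def by (rule sum.cong) (auto simp: indicator_def)
  also have "\<dots> = indicator {cell_image Y x} y"
    using assms by simp
  finally show "cmap0 X Y (indicator {x}) y = indicator {cell_image Y x} y" .
qed

lemma cmap0_supported_on_image: "cmap0 X Y c \<in> supported_on (cell_image Y ` cells0 X)"
  unfolding supported_on_def cmap0_def cell_image_def by (auto intro!: sum.neutral)

lemma indicator_cell_image_in_span:
  assumes "finite (cells0 X)" "x \<in> cells0 X"
  shows "indicator {cell_image Y x} \<in> FV.span (cmap0 X Y ` C0 X \<union> W)"
proof -
  have "indicator {x} \<in> C0 X"
    using assms(2) by (auto simp: C0_eq supported_on_def indicator_def)
  then show ?thesis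
    using cmap0_indicator[OF assms, of Y] by (metis FV.span_base UnI1 imageI)
qed

lemma linear_bdry: "Vector_Spaces.linear fscale fscale (bdry G Y)"
  unfolding Vector_Spaces.linear_iff
  by (simp only: vector_space_fscale bdry_def fscale_def plus_fun_def distrib_right sum.distrib
      sum_distrib_left mult.assoc simp_thms all_simps)

lemma bdry_indicator:
  assumes "finite (cells1 Y)" "e \<in> cells1 Y"
  shows "bdry G Y (indicator {e}) =
    indicator {cproj Y (fst (ends G e))} + indicator {cproj Y (snd (ends G e))}"
proof
  fix y
  have "bdry G Y (indicator {e}) y = (\<Sum>e'\<in>cells1 Y. if e' = e then
      (indicator {cproj Y (fst (ends G e))} + indicator {cproj Y (snd (ends G e))}) y else 0)"
    unfolding bdry_def by (rule sum.cong) (auto simp: indicator_def)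
  also have "\<dots> = (indicator {cproj Y (fst (ends G e))} + indicator {cproj Y (snd (ends G e))}) y"
    using assms by simp
  finally show "bdry G Y (indicator {e}) y =
    (indicator {cproj Y (fst (ends G e))} + indicator {cproj Y (snd (ends G e))}) y" .
qed

lemma indicator_endpoints_in_span_iff:
  assumes "finite (cells1 Y)" "e \<in> cells1 Y" "B0 G Y \<subseteq> W"
  shows "indicator {cproj Y (fst (ends G e))} \<in> FV.span W \<longleftrightarrow>
         indicator {cproj Y (snd (ends G e))} \<in> FV.span W"
proof -
  let ?a = "indicator {cproj Y (fst (ends G e))} :: nat option \<Rightarrow> bit"
  let ?b = "indicator {cproj Y (snd (ends G e))} :: nat option \<Rightarrow> bit"
  have "indicator {e} \<in> C1 Y"
    using assms(2) by (auto simp: C1_eq supported_on_def indicator_def)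
  then have "bdry G Y (indicator {e}) \<in> W"
    using assms(3) by (auto simp: B0_def)
  then have bd: "?a + ?b \<in> FV.span W"
    using bdry_indicator[OF assms(1,2)] by (simp add: FV.span_base)
  have "?b = (?a + ?b) + ?a" "?a = (?a + ?b) + ?b"
    by (auto simp: fun_eq_iff indicator_def)
  then show ?thesis
    using FV.span_add[OF bd] by metis
qed

lemma B0_no_edges: "cells1 Y = {} \<Longrightarrow> B0 G Y = {0}"
  by (auto simp: B0_def C1_eq supported_on_def bdry_def fun_eq_iff)

lemma Z1_no_edges: "cells1 Y = {} \<Longrightarrow> Z1 G Y = {0}"
  by (auto simp: Z1_def C1_eq supported_on_def bdry_def fun_eq_iff)

lemma hrank0_no_edges:
  assumes "finite (cells0 X)" "cells1 Y = {}"
  shows "hrank G 0 X Y = card (cell_image Y ` cells0 X)"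
proof -
  have fin: "finite (cell_image Y ` cells0 X)"
    using assms(1) by simp
  have "FV.span (cmap0 X Y ` C0 X \<union> {0}) = supported_on (cell_image Y ` cells0 X)"
  proof (rule span_eq_supported_on[OF fin])
    show "(\<lambda>y. indicator {y}) ` cell_image Y ` cells0 X \<subseteq>
        FV.span (cmap0 X Y ` C0 X \<union> {0})"
      by (blast intro: indicator_cell_image_in_span[OF assms(1)])
    have "{0} \<subseteq> supported_on (cell_image Y ` cells0 X)"
      by (simp add: supported_on_def)
    then show "cmap0 X Y ` C0 X \<union> {0} \<subseteq> supported_on (cell_image Y ` cells0 X)"
      using cmap0_supported_on_image by blast
  qed
  then show ?thesis
    using dim_eq_card_if_span_supported_on[OF fin] B0_no_edges[OF assms(2)]
    by (simp add: hrank_def dim_singleton_zero)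
qed

lemma hrank_of_acyclic_source:
  assumes "Z1 G X = {0}" "hrank G 0 X Y = n"
  shows "hrank G k X Y = (if k = 0 then n else 0)"
proof -
  have "cmap1 X Y ` Z1 G X = {0}"
    using assms(1) by (simp add: cmap1_def fun_eq_iff)
  then show ?thesis
    using assms(2) by (simp add: hrank_def dim_singleton_zero)
qed

text \<open>An edge with a private vertex, i.e.\ one that no other edge touches, cannot lie on a cycle.\<close>
lemma Z1_trivial_if_private_vertices:
  assumes fin: "finite (cells1 Y)"
    and private_vertex: "\<And>e e'. e \<in> cells1 Y \<Longrightarrow> e' \<in> cells1 Y \<Longrightarrow>
      bdry G Y (indicator {e'}) (p e) = (if e' = e then 1 else 0)"
  shows "Z1 G Y = {0}"
proof -
  interpret bd: Vector_Spaces.linear fscale fscale "bdry G Y"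
    by (rule linear_bdry)
  have "c = 0" if c: "c \<in> Z1 G Y" for c
  proof
    fix e
    show "c e = 0 e"
    proof (cases "e \<in> cells1 Y")
      case True
      have supp: "c \<in> supported_on (cells1 Y)"
        using c by (simp add: Z1_def C1_eq)
      have "0 = bdry G Y c (p e)"
        using c by (simp add: Z1_def)
      also have "\<dots> = (\<Sum>e'\<in>cells1 Y. c e' * bdry G Y (indicator {e'}) (p e))"
        by (subst expansion_in_indicators[OF fin supp])
           (simp only: bd.sum bd.scale, simp only: sum_apply fscale_def)
      also have "\<dots> = (\<Sum>e'\<in>cells1 Y. if e' = e then c e' else 0)"
        by (rule sum.cong) (simp_all add: private_vertex[OF True] del: mult_bit_eq_and)
      also have "\<dots> = c e"
        using True fin by simp
      finally show ?thesis by simp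
    qed (use c in \<open>simp add: Z1_def C1_def\<close>)
  qed
  then show ?thesis
    by (auto simp: Z1_def C1_def bd.zero)
qed

lemma dim_B0_of_acyclic:
  assumes fin: "finite (cells1 Y)" and acyclic: "Z1 G Y = {0}"
  shows "fdim (B0 G Y) = card (cells1 Y)"
proof -
  interpret bd: Vector_Spaces.linear fscale fscale "bdry G Y"
    by (rule linear_bdry)
  let ?E = "(\<lambda>e. indicator {e}) ` cells1 Y :: (nat \<Rightarrow> bit) set"
  have span_E: "FV.span ?E = C1 Y"
    by (simp add: span_indicators[OF fin] C1_eq)
  have inj: "inj_on (bdry G Y) (FV.span ?E)"
    unfolding span_E bd.inj_on_iff_eq_0[OF subspace_supported_on[of "cells1 Y"], folded C1_eq]
    using acyclic by (auto simp: Z1_def zero_fun_def)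
  have "fdim (B0 G Y) = fdim (FV.span (bdry G Y ` ?E))"
    by (simp add: B0_def bd.span_image span_E[symmetric])
  also have "\<dots> = card (bdry G Y ` ?E)"
    by (rule FV.dim_span_eq_card_independent)
       (rule bd.independent_injective_image[OF independent_indicators inj])
  also have "\<dots> = card ?E"
    using inj by (simp add: card_image inj_on_subset FV.span_superset)
  also have "\<dots> = card (cells1 Y)"
    by (rule card_image) (auto simp: inj_on_def indicator_def fun_eq_iff split: if_splits)
  finally show ?thesis .
qed

lemma indicators_in_span_if_adjacent_to_image:
  assumes "finite (cells0 X)" "finite (cells1 Y)"
    and adjacent: "\<And>y. y \<in> cells0 Y \<Longrightarrow> y \<in> cell_image Y ` cells0 X \<or>
      (\<exists>e\<in>cells1 Y. cproj Y (fst (ends G e)) \<in> cell_image Y ` cells0 X \<and>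
         cproj Y (snd (ends G e)) = y)"
  shows "(\<lambda>y. indicator {y}) ` cells0 Y \<subseteq> FV.span (cmap0 X Y ` C0 X \<union> B0 G Y)"
proof clarify
  fix y assume "y \<in> cells0 Y"
  then consider "y \<in> cell_image Y ` cells0 X"
    | e where "e \<in> cells1 Y" "cproj Y (fst (ends G e)) \<in> cell_image Y ` cells0 X"
        "cproj Y (snd (ends G e)) = y"
    using adjacent by blast
  then show "indicator {y} \<in> FV.span (cmap0 X Y ` C0 X \<union> B0 G Y)"
  proof cases
    case 1
    then show ?thesis
      using indicator_cell_image_in_span[OF assms(1)] by blast
  next
    case 2
    obtain x where "x \<in> cells0 X" "cproj Y (fst (ends G e)) = cell_image Y x"
      using 2(2) by blast
    then have "indicator {cproj Y (fst (ends G e))} \<in> FV.span (cmap0 X Y ` C0 X \<union> B0 G Y)"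
      using indicator_cell_image_in_span[OF assms(1)] by simp
    then show ?thesis
      using indicator_endpoints_in_span_iff[OF assms(2) 2(1) Un_upper2] 2(3) by simp
  qed
qed

text \<open>The spanning hypothesis says that every component of the forest \<open>Y\<close> meets the image of
  \<open>X\<close>; the rank is then the number of components of \<open>Y\<close>.\<close>
lemma hrank0_into_acyclic:
  assumes "finite (cells0 X)" "finite (cells0 Y)" "finite (cells1 Y)"
    and endpoints: "\<And>e. e \<in> cells1 Y \<Longrightarrow>
      cproj Y (fst (ends G e)) \<in> cells0 Y \<and> cproj Y (snd (ends G e)) \<in> cells0 Y"
    and image: "cell_image Y ` cells0 X \<subseteq> cells0 Y"
    and acyclic: "Z1 G Y = {0}"
    and spanning: "(\<lambda>y. indicator {y}) ` cells0 Y \<subseteq> FV.span (cmap0 X Y ` C0 X \<union> B0 G Y)"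
  shows "hrank G 0 X Y = card (cells0 Y) - card (cells1 Y)"
proof -
  have "supported_on (cell_image Y ` cells0 X) \<subseteq> supported_on (cells0 Y)"
    using image unfolding supported_on_def by blast
  then have "cmap0 X Y ` C0 X \<subseteq> supported_on (cells0 Y)"
    using cmap0_supported_on_image by blast
  moreover have "B0 G Y \<subseteq> supported_on (cells0 Y)"
    using endpoints unfolding B0_def supported_on_def bdry_def by (auto intro!: sum.neutral)
  ultimately have "FV.span (cmap0 X Y ` C0 X \<union> B0 G Y) = supported_on (cells0 Y)"
    using span_eq_supported_on[OF assms(2) spanning] by blast
  then have "fdim (cmap0 X Y ` C0 X \<union> B0 G Y) = card (cells0 Y)"
    by (rule dim_eq_card_if_span_supported_on[OF assms(2)])
  then show ?thesis
    by (simp add: hrank_def dim_B0_of_acyclic[OF assms(3) acyclic])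
qed

lemma dgm_of_constant_rank:
  assumes "0 < L" and "\<And>i j. i \<le> j \<Longrightarrow> j < L \<Longrightarrow> r i j = c"
  shows "dgm L r = (\<lambda>bd. if bd = (0, \<infinity>) then c else 0)"
proof
  fix bd :: "nat \<times> enat"
  show "dgm L r bd = (if bd = (0, \<infinity>) then c else 0)"
  proof (cases bd)
    case (Pair b d)
    then show ?thesis
      using assms by (cases d) (auto simp: dgm_def)
  qed
qed

lemma dgm_first_interval: "1 < L \<Longrightarrow> dgm L r (0, enat 1) = r 0 0 - r 0 1"
  by (simp add: dgm_def)

section \<open>The colour filtration and the examples\<close>

definition colour_filtration :: "graph \<Rightarrow> filt" where
  "colour_filtration G = (\<lambda>v. real (col G v),
     \<lambda>e. max (real (col G (fst (ends G e)))) (real (col G (snd (ends G e)))))"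

lemma perm_equiv_colour_filtration: "perm_equiv_filtration colour_filtration"
  unfolding perm_equiv_filtration_def
proof (intro conjI allI impI ballI)
  show "is_filtration G (colour_filtration G)" for G
    by (simp add: is_filtration_def colour_filtration_def)
next
  fix G H pv pe v assume "graph_iso G H pv pe" "v \<in> gV G"
  then show "fst (colour_filtration H) (pv v) = fst (colour_filtration G) v"
    by (simp add: graph_iso_def colour_filtration_def)
next
  fix G H pv pe e assume G: "wf_graph G" and iso: "graph_iso G H pv pe" and e: "e \<in> gE G"
  have "fst (ends G e) \<in> gV G" "snd (ends G e) \<in> gV G"
    using G e by (auto simp: wf_graph_def)
  then have "col H (pv (fst (ends G e))) = col G (fst (ends G e))"
    "col H (pv (snd (ends G e))) = col G (snd (ends G e))"
    using iso by (auto simp: graph_iso_def)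
  moreover have "ends H (pe e) = (pv (fst (ends G e)), pv (snd (ends G e))) \<or>
      ends H (pe e) = (pv (snd (ends G e)), pv (fst (ends G e)))"
    using iso e by (simp add: graph_iso_def)
  ultimately show "snd (colour_filtration H) (pe e) = snd (colour_filtration G) e"
    by (auto simp: colour_filtration_def max.commute)
qed

definition two_points :: graph where
  "two_points = \<lparr>gV = {0, 1}, gE = {}, ends = \<lambda>_. (0, 0), col = \<lambda>_. 0\<rparr>"

definition point_and_edge :: graph where
  "point_and_edge = \<lparr>gV = {0, 1, 2}, gE = {0}, ends = \<lambda>_. (0, 2),
     col = \<lambda>v. if v = 2 then 1 else 0\<rparr>"

definition point :: graph where
  "point = \<lparr>gV = {0}, gE = {}, ends = \<lambda>_. (0, 0), col = \<lambda>_. 0\<rparr>"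

definition path3 :: graph where
  "path3 = \<lparr>gV = {0, 1, 2}, gE = {0, 1}, ends = \<lambda>e. (e, 2),
     col = \<lambda>v. if v = 2 then 1 else 0\<rparr>"

lemma wf_graph_examples:
  "wf_graph two_points" "wf_graph point_and_edge" "wf_graph point" "wf_graph path3"
  by (auto simp: wf_graph_def two_points_def point_and_edge_def point_def path3_def)

lemma fvals_examples:
  "fvals two_points (colour_filtration two_points) = [0]"
  "fvals point_and_edge (colour_filtration point_and_edge) = [0, 1]"
  "fvals point (colour_filtration point) = [0]"
  "fvals path3 (colour_filtration path3) = [0, 1]"
  by (simp_all add: fvals_def colour_filtration_def two_points_def point_and_edge_def point_def
      path3_def insert_commute)

lemma nvals_examples:
  "nvals two_points (colour_filtration two_points) = 1"
  "nvals point_and_edge (colour_filtration point_and_edge) = 2"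
  "nvals point (colour_filtration point) = 1"
  "nvals path3 (colour_filtration path3) = 2"
  by (simp_all add: nvals_def fvals_examples)

lemma fwd_spaces:
  "fwd_space two_points (colour_filtration two_points) 0 = ({0, 1}, {}, {}, {})"
  "fwd_space point_and_edge (colour_filtration point_and_edge) 0 = ({0, 1}, {}, {}, {})"
  "fwd_space point_and_edge (colour_filtration point_and_edge) 1 = ({0, 1, 2}, {0}, {}, {})"
  "fwd_space path3 (colour_filtration path3) 0 = ({0, 1}, {}, {}, {})"
  "fwd_space path3 (colour_filtration path3) 1 = ({0, 1, 2}, {0, 1}, {}, {})"
  by (simp_all add: fwd_space_def subV_def subE_def fvals_examples)
     (auto simp: two_points_def point_and_edge_def path3_def colour_filtration_def)

lemma bwd_spaces:
  "bwd_space two_points (colour_filtration two_points) 0 = ({0, 1}, {}, {}, {})"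
  "bwd_space two_points (colour_filtration two_points) 1 = ({0, 1}, {}, {0, 1}, {})"
  "bwd_space point_and_edge (colour_filtration point_and_edge) 0 = ({0, 1, 2}, {0}, {}, {})"
  "bwd_space point_and_edge (colour_filtration point_and_edge) 1 = ({0, 1, 2}, {0}, {0, 2}, {0})"
  "bwd_space point (colour_filtration point) 0 = ({0}, {}, {}, {})"
  "bwd_space point (colour_filtration point) 1 = ({0}, {}, {0}, {})"
  "bwd_space path3 (colour_filtration path3) 0 = ({0, 1, 2}, {0, 1}, {}, {})"
  "bwd_space path3 (colour_filtration path3) 1 = ({0, 1, 2}, {0, 1}, {0, 1, 2}, {0, 1})"
  "bwd_space path3 (colour_filtration path3) 2 = ({0, 1, 2}, {0, 1}, {0, 1, 2}, {0, 1})"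
  by (simp_all add: bwd_space_def nvals_examples ICV_def ICE_def fvals_examples
      numeral_2_eq_2 atLeastLessThanSuc)
     (auto simp: two_points_def point_and_edge_def point_def path3_def colour_filtration_def)

lemmas cell_simps = cells0_def cells1_def cproj_def cell_image_def

lemma Z1_point_and_edge: "Z1 point_and_edge ({0, 1, 2}, {0}, {}, {}) = {0}"
  by (rule Z1_trivial_if_private_vertices[where p = "\<lambda>_. Some 0"])
     (simp_all add: cell_simps bdry_indicator point_and_edge_def)

lemma Z1_path3: "Z1 path3 ({0, 1, 2}, {0, 1}, {}, {}) = {0}"
  by (rule Z1_trivial_if_private_vertices[where p = Some])
     (auto simp: cell_simps bdry_indicator path3_def)

lemma hrank0_into_point_and_edge:
  assumes "finite (cells0 X)"
    and "{Some 0, Some 1} \<subseteq> cell_image ({0, 1, 2}, {0}, {}, {}) ` cells0 X"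
    and "cell_image ({0, 1, 2}, {0}, {}, {}) ` cells0 X \<subseteq> cells0 ({0, 1, 2}, {0}, {}, {})"
  shows "hrank point_and_edge 0 X ({0, 1, 2}, {0}, {}, {}) = 2"
proof -
  let ?Y = "({0, 1, 2}, {0}, {}, {}) :: space"
  have Y: "cells0 ?Y = {Some 0, Some 1, Some 2}" "cells1 ?Y = {0}" "\<And>v. cproj ?Y v = Some v"
    by (auto simp: cells0_def cells1_def cproj_def)
  have "hrank point_and_edge 0 X ?Y = card (cells0 ?Y) - card (cells1 ?Y)"
    using assms
    by (intro hrank0_into_acyclic Z1_point_and_edge indicators_in_span_if_adjacent_to_image)
       (auto simp: Y point_and_edge_def simp del: One_nat_def)
  then show ?thesis
    unfolding Y by simp
qed

lemma hrank0_into_path3: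
  assumes "finite (cells0 X)"
    and "{Some 0, Some 1} \<subseteq> cell_image ({0, 1, 2}, {0, 1}, {}, {}) ` cells0 X"
    and "cell_image ({0, 1, 2}, {0, 1}, {}, {}) ` cells0 X \<subseteq> cells0 ({0, 1, 2}, {0, 1}, {}, {})"
  shows "hrank path3 0 X ({0, 1, 2}, {0, 1}, {}, {}) = 1"
proof -
  let ?Y = "({0, 1, 2}, {0, 1}, {}, {}) :: space"
  have Y: "cells0 ?Y = {Some 0, Some 1, Some 2}" "cells1 ?Y = {0, 1}" "\<And>v. cproj ?Y v = Some v"
    by (auto simp: cells0_def cells1_def cproj_def)
  have "hrank path3 0 X ?Y = card (cells0 ?Y) - card (cells1 ?Y)"
    using assms
    by (intro hrank0_into_acyclic Z1_path3 indicators_in_span_if_adjacent_to_image)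
       (auto simp: Y path3_def simp del: One_nat_def)
  then show ?thesis
    unfolding Y by simp
qed

lemma le_less_2_cases: "(i::nat) \<le> j \<Longrightarrow> j < 2 \<Longrightarrow> (i, j) \<in> {(0, 0), (0, 1), (1, 1)}"
  by auto

lemma le_less_3_cases:
  "(i::nat) \<le> j \<Longrightarrow> j < 3 \<Longrightarrow> (i, j) \<in> {(0, 0), (0, 1), (0, 2), (1, 1), (1, 2), (2, 2)}"
  by auto

abbreviation (input) essential_H0_dgm :: "nat \<Rightarrow> nat \<Rightarrow> nat \<times> enat \<Rightarrow> nat" where
  "essential_H0_dgm c k \<equiv> (\<lambda>bd. if bd = (0, \<infinity>) then (if k = 0 then c else 0) else 0)"

lemma fwd_dgm_two_points: "fwd_dgm colour_filtration two_points k = essential_H0_dgm 2 k"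
proof -
  let ?X = "fwd_space two_points (colour_filtration two_points)"
  have "hrank two_points k (?X 0) (?X 0) = (if k = 0 then 2 else 0)"
    unfolding fwd_spaces
    by (rule hrank_of_acyclic_source) (simp_all add: Z1_no_edges hrank0_no_edges cell_simps)
  then show ?thesis
    unfolding fwd_dgm_def nvals_examples by (intro dgm_of_constant_rank) auto
qed

lemma fwd_dgm_point_and_edge: "fwd_dgm colour_filtration point_and_edge k = essential_H0_dgm 2 k"
proof -
  let ?X = "fwd_space point_and_edge (colour_filtration point_and_edge)"
  have "hrank point_and_edge k (?X 0) (?X 0) = (if k = 0 then 2 else 0)"
    unfolding fwd_spaces
    by (rule hrank_of_acyclic_source) (simp_all add: Z1_no_edges hrank0_no_edges cell_simps)
  moreover have "hrank point_and_edge k (?X 0) (?X 1) = (if k = 0 then 2 else 0)"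
    unfolding fwd_spaces
    by (rule hrank_of_acyclic_source[OF Z1_no_edges hrank0_into_point_and_edge]) (auto simp: cell_simps)
  moreover have "hrank point_and_edge k (?X 1) (?X 1) = (if k = 0 then 2 else 0)"
    unfolding fwd_spaces
    by (rule hrank_of_acyclic_source[OF Z1_point_and_edge hrank0_into_point_and_edge]) (auto simp: cell_simps)
  ultimately show ?thesis
    unfolding fwd_dgm_def nvals_examples by (intro dgm_of_constant_rank) (auto dest!: le_less_2_cases)
qed

lemma bwd_dgm_point: "bwd_dgm colour_filtration point k = essential_H0_dgm 1 k"
proof -
  let ?X = "bwd_space point (colour_filtration point)"
  have "hrank point k (?X 0) (?X 0) = (if k = 0 then 1 else 0)"
    "hrank point k (?X 0) (?X 1) = (if k = 0 then 1 else 0)"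
    "hrank point k (?X 1) (?X 1) = (if k = 0 then 1 else 0)"
    unfolding bwd_spaces
    by (rule hrank_of_acyclic_source; simp add: Z1_no_edges hrank0_no_edges cell_simps)+
  then show ?thesis
    unfolding bwd_dgm_def nvals_examples
    by (intro dgm_of_constant_rank) (auto simp del: One_nat_def dest!: le_less_2_cases)
qed

lemma bwd_dgm_path3: "bwd_dgm colour_filtration path3 k = essential_H0_dgm 1 k"
proof -
  let ?X = "bwd_space path3 (colour_filtration path3)"
  let ?Q = "({0, 1, 2}, {0, 1}, {0, 1, 2}, {0, 1}) :: space"
  have collapsed: "?X 1 = ?Q" "?X 2 = ?Q"
    by (rule bwd_spaces)+
  have "hrank path3 k (?X 0) (?X 0) = (if k = 0 then 1 else 0)"
    unfolding bwd_spaces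
    by (rule hrank_of_acyclic_source[OF Z1_path3 hrank0_into_path3]) (auto simp: cell_simps)
  moreover have "hrank path3 k (?X 0) ?Q = (if k = 0 then 1 else 0)"
    unfolding bwd_spaces
    by (rule hrank_of_acyclic_source[OF Z1_path3]) (simp add: hrank0_no_edges cell_simps)
  moreover have "hrank path3 k ?Q ?Q = (if k = 0 then 1 else 0)"
    by (rule hrank_of_acyclic_source) (simp_all add: Z1_no_edges hrank0_no_edges cell_simps)
  ultimately show ?thesis
    unfolding bwd_dgm_def nvals_examples
    by (intro dgm_of_constant_rank)
       (auto simp: collapsed simp del: One_nat_def dest!: le_less_3_cases)
qed

lemma bwd_dgm_two_points: "bwd_dgm colour_filtration two_points 0 (0, enat 1) = 1"
proof -
  let ?X = "bwd_space two_points (colour_filtration two_points)"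
  have "hrank two_points 0 (?X 0) (?X 0) = 2" "hrank two_points 0 (?X 0) (?X 1) = 1"
    unfolding bwd_spaces by (simp_all add: hrank0_no_edges cell_simps)
  then show ?thesis
    by (simp add: bwd_dgm_def nvals_examples dgm_first_interval del: One_nat_def)
qed

lemma bwd_dgm_point_and_edge: "bwd_dgm colour_filtration point_and_edge 0 (0, enat 1) = 0"
proof -
  let ?X = "bwd_space point_and_edge (colour_filtration point_and_edge)"
  have "hrank point_and_edge 0 (?X 0) (?X 0) = 2"
    unfolding bwd_spaces by (rule hrank0_into_point_and_edge) (auto simp: cell_simps)
  moreover have "hrank point_and_edge 0 (?X 0) (?X 1) = 2"
    unfolding bwd_spaces by (simp add: hrank0_no_edges cell_simps card_insert_if)
  ultimately show ?thesis
    by (simp add: bwd_dgm_def nvals_examples dgm_first_interval del: One_nat_def)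
qed

lemma fwd_dgm_point: "fwd_dgm colour_filtration point 0 (0, enat 1) = 0"
  by (simp add: fwd_dgm_def nvals_examples dgm_def)

lemma fwd_dgm_path3: "fwd_dgm colour_filtration path3 0 (0, enat 1) = 1"
proof -
  let ?X = "fwd_space path3 (colour_filtration path3)"
  have "hrank path3 0 (?X 0) (?X 0) = 2"
    unfolding fwd_spaces by (simp add: hrank0_no_edges cell_simps)
  moreover have "hrank path3 0 (?X 0) (?X 1) = 1"
    unfolding fwd_spaces by (rule hrank0_into_path3) (auto simp: cell_simps)
  ultimately show ?thesis
    by (simp add: fwd_dgm_def nvals_examples dgm_first_interval del: One_nat_def)
qed

theorem proposition1:
  shows "(\<exists>F. perm_equiv_filtration F \<and>
           (\<exists>G H. wf_graph G \<and> wf_graph H \<and>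
              (\<forall>k. fwd_dgm F G k = fwd_dgm F H k) \<and> (\<exists>k. bwd_dgm F G k \<noteq> bwd_dgm F H k))) \<and>
         (\<exists>F. perm_equiv_filtration F \<and>
           (\<exists>G H. wf_graph G \<and> wf_graph H \<and>
              (\<forall>k. bwd_dgm F G k = bwd_dgm F H k) \<and> (\<exists>k. fwd_dgm F G k \<noteq> fwd_dgm F H k)))"
proof (intro conjI exI[of _ colour_filtration] perm_equiv_colour_filtration)
  have "bwd_dgm colour_filtration two_points 0 \<noteq> bwd_dgm colour_filtration point_and_edge 0"
    using bwd_dgm_two_points bwd_dgm_point_and_edge by auto
  then show "\<exists>G H. wf_graph G \<and> wf_graph H \<and>
      (\<forall>k. fwd_dgm colour_filtration G k = fwd_dgm colour_filtration H k) \<and>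
      (\<exists>k. bwd_dgm colour_filtration G k \<noteq> bwd_dgm colour_filtration H k)"
    by (intro exI[of _ two_points] exI[of _ point_and_edge] conjI allI exI[of _ 0] wf_graph_examples)
       (simp_all only: fwd_dgm_two_points fwd_dgm_point_and_edge)
  have "fwd_dgm colour_filtration point 0 \<noteq> fwd_dgm colour_filtration path3 0"
    using fwd_dgm_point fwd_dgm_path3 by auto
  then show "\<exists>G H. wf_graph G \<and> wf_graph H \<and>
      (\<forall>k. bwd_dgm colour_filtration G k = bwd_dgm colour_filtration H k) \<and>
      (\<exists>k. fwd_dgm colour_filtration G k \<noteq> fwd_dgm colour_filtration H k)"
    by (intro exI[of _ point] exI[of _ path3] conjI allI exI[of _ 0] wf_graph_examples)
       (simp_all only: bwd_dgm_point bwd_dgm_path3)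
qed

end
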